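(* Let $\bar D$ be any distribution over $\mathcal{X}\times\{0,1\}$ with random variables $(\mathsf X,\bar{\mathsf Y})\sim\bar D$, and let $f\colon\mathcal X\to[0,1]$ be any randomised classifier. Let $\tau\in[0,1]$ and put $c:=\frac{1}{1+\tau}\in[\tfrac12,1]$. Then: (i) if $\mathrm{FNR}(f;\bar D)<1$, then $\mathrm{DI}(f;\bar D)\ge\tau \iff \mathrm{CS}_{\mathrm{bal}}(f;\bar D,c)\ge 1-c$; (ii) if $0<\mathrm{FNR}(f;\bar D)<1$, then $\mathrm{DI}^\diamond(f;\bar D)\ge\tau \iff \mathrm{CS}_{\mathrm{bal}}(f;\bar D,c)\in[1-c,\,c]$.
   Context: A randomised classifier $f\colon\mathcal X\to[0,1]$ predicts label $1$ on $x$ with probability $f(x)$. For a distribution $\bar D$ of $(\mathsf X,\bar{\mathsf Y})$ on $\mathcal X\times\{0,1\}$: $\mathrm{FNR}(f;\bar D)=\mathbb E_{\mathsf X\mid\bar{\mathsf Y}=1}[1-f(\mathsf X)]$, $\mathrm{FPR}(f;\bar D)=\mathbb E_{\mathsf X\mid\bar{\mathsf Y}=0}[f(\mathsf X)]$. The balanced cost-sensitive risk is $\mathrm{CS}_{\mathrm{bal}}(f;\bar D,c)=(1-c)\,\mathrm{FNR}(f;\bar D)+c\,\mathrm{FPR}(f;\bar D)$. The disparate impact factor is $\mathrm{DI}(f;\bar D)=\frac{\mathrm{FPR}(f;\bar D)}{1-\mathrm{FNR}(f;\bar D)}$, and its symmetrised version is $\mathrm{DI}^\diamond(f;\bar D)=\min\big(\mathrm{DI}(f;\bar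 D),\mathrm{DI}(1-f;\bar D)\big)$, where $1-f$ is the classifier $x\mapsto 1-f(x)$. *)

theory Defs
  imports "HOL-Probability.Probability"
begin

text \<open>A distribution over X x {0,1} is a probability measure D on the product
  space (label 1 = True, label 0 = False).  Conditional expectation of g(X) given
  label b is E[g(X) 1{Y=b}] / P(Y=b).\<close>

definition cond_exp_label :: "('x \<times> bool) measure \<Rightarrow> bool \<Rightarrow> ('x \<Rightarrow> real) \<Rightarrow> real" where
  "cond_exp_label D b g =
     (\<integral>p. (if snd p = b then g (fst p) else 0) \<partial>D) / measure D {p \<in> space D. snd p = b}"

definition FNR :: "('x \<Rightarrow> real) \<Rightarrow> ('x \<times> bool) measure \<Rightarrow> real" where
  "FNR f D = cond_exp_label D True (\<lambda>x. 1 - f x)"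

definition FPR :: "('x \<Rightarrow> real) \<Rightarrow> ('x \<times> bool) measure \<Rightarrow> real" where
  "FPR f D = cond_exp_label D False f"

definition CS_bal :: "('x \<Rightarrow> real) \<Rightarrow> ('x \<times> bool) measure \<Rightarrow> real \<Rightarrow> real" where
  "CS_bal f D c = (1 - c) * FNR f D + c * FPR f D"

definition DI :: "('x \<Rightarrow> real) \<Rightarrow> ('x \<times> bool) measure \<Rightarrow> real" where
  "DI f D = FPR f D / (1 - FNR f D)"

definition DI_sym :: "('x \<Rightarrow> real) \<Rightarrow> ('x \<times> bool) measure \<Rightarrow> real" where
  "DI_sym f D = min (DI f D) (DI (\<lambda>x. 1 - f x) D)"

end

theory Submission
  imports Defs
begin

text \<open>With \<open>c = 1/(1+\<tau>)\<close> one has \<open>1 - c = \<tau> c\<close>, so after clearing the positive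
  denominator the inequality \<open>DI \<ge> \<tau>\<close> is a linear inequality in \<open>FNR\<close> and \<open>FPR\<close>,
  namely \<open>CS_bal \<ge> 1 - c\<close>. Replacing \<open>f\<close> by \<open>1 - f\<close> swaps the roles of the
  two error rates up to complementation, and the same computation turns
  \<open>DI(1 - f) \<ge> \<tau>\<close> into \<open>CS_bal \<le> c\<close>.\<close>

lemma le_divide_iff_cost_weighted:
  fixes \<tau> c d n :: real
  assumes "\<tau> > -1" "c = 1 / (1 + \<tau>)" "d > 0"
  shows "\<tau> \<le> n / d \<longleftrightarrow> (1 - c) * d \<le> c * n"
proof -
  have "1 + \<tau> > 0"
    using assms(1) by simp
  then have c_pos: "c > 0" and one_minus_c: "1 - c = c * \<tau>"
    unfolding assms(2) by (simp_all add: field_simps)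
  have "\<tau> \<le> n / d \<longleftrightarrow> \<tau> * d \<le> n"
    using assms(3) by (simp add: pos_le_divide_eq)
  also have "\<dots> \<longleftrightarrow> c * (\<tau> * d) \<le> c * n"
    using c_pos by simp
  finally show ?thesis
    by (simp add: one_minus_c mult.assoc)
qed

lemma DI_ge_iff_CS_bal_ge:
  assumes "\<tau> > -1" "c = 1 / (1 + \<tau>)" "FNR f D < 1"
  shows "\<tau> \<le> DI f D \<longleftrightarrow> 1 - c \<le> CS_bal f D c"
  using le_divide_iff_cost_weighted[OF assms(1,2), of "1 - FNR f D" "FPR f D"] assms(3)
  by (simp add: DI_def CS_bal_def algebra_simps)

lemma DI_complement_ge_iff_CS_bal_le:
  assumes "\<tau> > -1" "c = 1 / (1 + \<tau>)" "0 < FNR f D"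
    and "FNR (\<lambda>x. 1 - f x) D = 1 - FNR f D"
    and "FPR (\<lambda>x. 1 - f x) D = 1 - FPR f D"
  shows "\<tau> \<le> DI (\<lambda>x. 1 - f x) D \<longleftrightarrow> CS_bal f D c \<le> c"
  unfolding DI_def CS_bal_def assms(4,5)
  using le_divide_iff_cost_weighted[OF assms(1,2), of "FNR f D" "1 - FPR f D"] assms(3)
  by (simp add: algebra_simps)

text \<open>If the negative class is null, both false positive rates vanish, so
  \<open>DI\<^sup>\<diamond> = 0\<close>; the upper bound \<open>CS_bal \<le> c\<close> then holds automatically because
  \<open>c \<ge> 1/2\<close>, which is where \<open>\<tau> \<le> 1\<close> is needed.\<close>

lemma DI_sym_ge_iff_CS_bal_mem_null_negatives:
  assumes "0 \<le> \<tau>" "\<tau> \<le> 1" "c = 1 / (1 + \<tau>)" "FNR f D < 1"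
    and "FPR f D = 0" "FPR (\<lambda>x. 1 - f x) D = 0"
  shows "\<tau> \<le> DI_sym f D \<longleftrightarrow> CS_bal f D c \<in> {1 - c .. c}"
proof -
  have "1 + \<tau> > 0"
    using assms(1) by simp
  then have "1 / 2 \<le> c" "c \<le> 1"
    using assms(1,2) unfolding assms(3) by (simp_all add: field_simps)
  then have "1 - c \<le> c" "0 \<le> 1 - c"
    by simp_all
  then have "(1 - c) * FNR f D \<le> c"
    using assms(4) mult_left_le[of "FNR f D" "1 - c"] by linarith
  then have "CS_bal f D c \<le> c"
    using assms(5) by (simp add: CS_bal_def)
  moreover have "DI_sym f D = DI f D"
    using assms(5,6) by (simp add: DI_sym_def DI_def)
  ultimately show ?thesis
    using DI_ge_iff_CS_bal_ge[of \<tau> c f D] assms(1,3,4) by auto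
qed

lemma cond_exp_label_null:
  assumes "measure D {p \<in> space D. snd p = b} = 0"
  shows "cond_exp_label D b g = 0"
  using assms by (simp add: cond_exp_label_def)

lemma DI_sym_ge_iff_CS_bal_mem:
  assumes "0 \<le> \<tau>" "\<tau> \<le> 1" "c = 1 / (1 + \<tau>)" and FNR: "0 < FNR f D" "FNR f D < 1"
    and complement: "\<And>b. measure D {p \<in> space D. snd p = b} \<noteq> 0 \<Longrightarrow>
      cond_exp_label D b (\<lambda>x. 1 - f x) = 1 - cond_exp_label D b f"
  shows "\<tau> \<le> DI_sym f D \<longleftrightarrow> CS_bal f D c \<in> {1 - c .. c}"
proof (cases "measure D {p \<in> space D. snd p = False} = 0")
  case True
  then have "FPR f D = 0" "FPR (\<lambda>x. 1 - f x) D = 0"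
    unfolding FPR_def by (simp_all add: cond_exp_label_null)
  then show ?thesis
    by (rule DI_sym_ge_iff_CS_bal_mem_null_negatives[OF assms(1-3) FNR(2)])
next
  case False
  have tau_gt: "\<tau> > -1"
    using assms(1) by simp
  have "measure D {p \<in> space D. snd p = True} \<noteq> 0"
  proof
    assume "measure D {p \<in> space D. snd p = True} = 0"
    then have "FNR f D = 0"
      unfolding FNR_def by (rule cond_exp_label_null)
    with FNR(1) show False
      by simp
  qed
  then have "FNR (\<lambda>x. 1 - f x) D = 1 - FNR f D"
    unfolding FNR_def by (simp add: complement)
  moreover have "FPR (\<lambda>x. 1 - f x) D = 1 - FPR f D"
    unfolding FPR_def using False by (rule complement)
  ultimately have "\<tau> \<le> DI (\<lambda>x. 1 - f x) D \<longleftrightarrow> CS_bal f D c \<le> c"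
    by (rule DI_complement_ge_iff_CS_bal_le[OF tau_gt assms(3) FNR(1)])
  then show ?thesis
    using DI_ge_iff_CS_bal_ge[OF tau_gt assms(3) FNR(2)] by (simp add: DI_sym_def)
qed

lemma cond_exp_label_complement:
  assumes "finite_measure D"
    and S: "{p \<in> space D. snd p = b} \<in> sets D"
    and int: "integrable D (\<lambda>p. if snd p = b then g (fst p) else 0)"
    and nonnull: "measure D {p \<in> space D. snd p = b} \<noteq> 0"
  shows "cond_exp_label D b (\<lambda>x. 1 - g x) = 1 - cond_exp_label D b g"
proof -
  let ?S = "{p \<in> space D. snd p = b}"
  have "integrable D (indicator ?S :: _ \<Rightarrow> real)"
    using S finite_measure.emeasure_finite[OF assms(1)]
    by (simp add: integrable_indicator_iff less_top[symmetric])
  have "(\<integral>p. (if snd p = b then 1 - g (fst p) else 0) \<partial>D)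
      = (\<integral>p. indicator ?S p - (if snd p = b then g (fst p) else 0) \<partial>D)"
    by (rule Bochner_Integration.integral_cong) (auto simp: indicator_def)
  also have "\<dots> = measure D ?S - (\<integral>p. (if snd p = b then g (fst p) else 0) \<partial>D)"
    using \<open>integrable D (indicator ?S)\<close> int S by simp
  finally show ?thesis
    using nonnull unfolding cond_exp_label_def by (simp add: field_simps)
qed

lemma label_class_in_sets:
  assumes "sets D = sets (M \<Otimes>\<^sub>M count_space (UNIV :: bool set))"
  shows "{p \<in> space D. snd p = b} \<in> sets D"
proof -
  have "snd \<in> measurable D (count_space UNIV)"
    using measurable_snd measurable_cong_sets[OF assms refl] by blast
  then have "snd -` {b} \<inter> space D \<in> sets D"
    by (rule measurable_sets) simp
  moreover have "snd -` {b} \<inter> space D = {p \<in> space D. snd p = b}"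
    by auto
  ultimately show ?thesis
    by simp
qed

lemma integrable_restrict_label:
  fixes g :: "'x \<Rightarrow> real"
  assumes "finite_measure D"
    and sets_D: "sets D = sets (M \<Otimes>\<^sub>M count_space (UNIV :: bool set))"
    and g: "g \<in> borel_measurable M" "\<And>x. x \<in> space M \<Longrightarrow> \<bar>g x\<bar> \<le> B"
  shows "integrable D (\<lambda>p. if snd p = b then g (fst p) else 0)"
proof (rule finite_measure.integrable_const_bound[OF assms(1), where B = B])
  have "space D = space M \<times> UNIV"
    using sets_eq_imp_space_eq[OF sets_D] by (simp add: space_pair_measure)
  then show "AE p in D. norm (if snd p = b then g (fst p) else 0) \<le> B"
    using g(2) order_trans[OF abs_ge_zero g(2)] by (intro AE_I2) auto
  have "fst \<in> measurable D M"
    using measurable_fst measurable_cong_sets[OF sets_D refl] by blast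
  then have "(\<lambda>p. g (fst p)) \<in> borel_measurable D"
    using measurable_comp g(1) unfolding comp_def by blast
  then show "(\<lambda>p. if snd p = b then g (fst p) else 0) \<in> borel_measurable D"
    using label_class_in_sets[OF sets_D] by (intro measurable_If) auto
qed

theorem lemma1:
  fixes M :: "'x measure" and D :: "('x \<times> bool) measure"
    and f :: "'x \<Rightarrow> real" and \<tau> c :: real
  assumes D: "prob_space D"
    and sets_D: "sets D = sets (M \<Otimes>\<^sub>M count_space (UNIV :: bool set))"
    and f_meas: "f \<in> borel_measurable M"
    and f_range: "\<And>x. x \<in> space M \<Longrightarrow> 0 \<le> f x \<and> f x \<le> 1"
    and tau: "0 \<le> \<tau>" "\<tau> \<le> 1"
    and c_def: "c = 1 / (1 + \<tau>)"
  shows "(FNR f D < 1 \<longrightarrow> (DI f D \<ge> \<tau> \<longleftrightarrow> CS_bal f D c \<ge> 1 - c))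
       \<and> (0 < FNR f D \<and> FNR f D < 1 \<longrightarrow>
            (DI_sym f D \<ge> \<tau> \<longleftrightarrow> CS_bal f D c \<in> {1 - c .. c}))"
proof -
  have fin: "finite_measure D"
    using D by (simp add: prob_space_def)
  have f_bound: "\<bar>f x\<bar> \<le> 1" if "x \<in> space M" for x
    using f_range[OF that] by simp
  have complement: "cond_exp_label D b (\<lambda>x. 1 - f x) = 1 - cond_exp_label D b f"
    if "measure D {p \<in> space D. snd p = b} \<noteq> 0" for b
    by (rule cond_exp_label_complement[OF fin label_class_in_sets[OF sets_D]
          integrable_restrict_label[OF fin sets_D f_meas f_bound] that])
  have "\<tau> > -1"
    using tau by simp
  then show ?thesis
    using DI_ge_iff_CS_bal_ge[OF _ c_def, of f D]
      DI_sym_ge_iff_CS_bal_mem[OF tau c_def _ _ complement] by blast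
qed

end
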